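(* Let $A$ be a finite alphabet. An infinite word $x$ over $A$ is normal if and only if there is a positive number $C$ such that for infinitely many lengths $\ell$, for every word $w$ of length $\ell$, $$\limsup_{N\to\infty}\frac{|x[1..\ell N]|^{al}_w}{N}<\frac{C}{|A|^\ell}.$$
   Context: $x[i..j]$ is the factor of $x$ from position $i$ to $j$ (positions start at 1). For words $v,w$, $|v|^{al}_w=|\{i: v[i..i+|w|-1]=w,\ i\equiv1\bmod|w|\}|$ (aligned occurrences). $x$ is normal if for every $\ell\ge1$ and every $u\in A^\ell$, $\lim_{n\to\infty}|x[1..n]|^{al}_u/(n/\ell)=|A|^{-\ell}$. *)

theory Defs
  imports Complex_Main "HOL-Library.Liminf_Limsup" "HOL-Library.Extended_Real"
begin

text \<open>Infinite words are functions nat => 'a; x 0 is the letter at position 1.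
  Finite words are lists.\<close>

definition prefix_word :: "(nat \<Rightarrow> 'a) \<Rightarrow> nat \<Rightarrow> 'a list" where
  "prefix_word x n = map x [0..<n]"

text \<open>Factor v[i..j] (positions start at 1).\<close>
definition factor :: "'a list \<Rightarrow> nat \<Rightarrow> nat \<Rightarrow> 'a list" where
  "factor v i j = take (Suc j - i) (drop (i - 1) v)"

definition aligned_occ :: "'a list \<Rightarrow> 'a list \<Rightarrow> nat" where
  "aligned_occ v w = card {i. 1 \<le> i \<and> i + length w - 1 \<le> length v \<and>
       factor v i (i + length w - 1) = w \<and> i mod length w = 1 mod length w}"

definition normal_word :: "'a set \<Rightarrow> (nat \<Rightarrow> 'a) \<Rightarrow> bool" where
  "normal_word A x \<longleftrightarrow> (\<forall>l\<ge>1. \<forall>u. length u = l \<and> set u \<subseteq> A \<longrightarrow>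
     (\<lambda>n. real (aligned_occ (prefix_word x n) u) / (real n / real l))
       \<longlonglongrightarrow> 1 / real (card A) ^ l)"

end

theory Submission
  imports Defs "HOL-Library.FuncSet" "HOL-Library.Infinite_Set"
begin

text \<open>If \<open>x\<close> is normal, every limsup equals \<open>|A|\<^sup>-\<^sup>l\<close>, so \<open>C = 2\<close> works at every level.
  Conversely, fix \<open>u\<close> of length \<open>k\<close> and an admissible level \<open>l\<close> much larger than \<open>k\<close>, and cut \<open>x\<close>
  into aligned \<open>l\<close>-blocks. All aligned \<open>k\<close>-blocks but at most one per \<open>l\<close>-block lie inside an
  \<open>l\<close>-block, and inside the \<open>l\<close>-block \<open>w\<close> they start at a fixed residue \<open>s\<close> mod \<open>k\<close>, so their
  occurrences of \<open>u\<close> are counted by the number of occurrences of \<open>u\<close> in \<open>w\<close> at positions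
  \<open>s, s + k, s + 2k, \<dots>\<close>. Over all words \<open>w\<close> of length \<open>l\<close> this count has mean about
  \<open>l |A|\<^sup>-\<^sup>k / k\<close> and variance at most \<open>l / k\<close>; since by hypothesis no \<open>l\<close>-word occurs more than
  \<open>C\<close> times as often as the uniform average, the total squared deviation along \<open>x\<close> is
  \<open>O(C l)\<close> per \<open>l\<close>-block. As in Chebyshev's inequality, this costs only \<open>O(k C / \<epsilon>)\<close> occurrences per
  \<open>l\<close>-block beyond \<open>(|A|\<^sup>-\<^sup>k + \<epsilon>) l / k\<close>, negligible for large \<open>l\<close>. Hence the
  frequency of \<open>u\<close> among the aligned \<open>k\<close>-blocks is at most \<open>|A|\<^sup>-\<^sup>k + \<epsilon>\<close> in the limit, for
  every \<open>u\<close>; as these frequencies add up to \<open>1\<close>, each tends to \<open>|A|\<^sup>-\<^sup>k\<close>.\<close>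

definition aligned_block :: "(nat \<Rightarrow> 'a) \<Rightarrow> nat \<Rightarrow> nat \<Rightarrow> 'a list" where
  "aligned_block x L j = map (\<lambda>q. x (j * L + q)) [0..<L]"

lemma length_aligned_block [simp]: "length (aligned_block x L j) = L"
  by (simp add: aligned_block_def)

lemma nth_aligned_block: "p < L \<Longrightarrow> aligned_block x L j ! p = x (j * L + p)"
  by (simp add: aligned_block_def)

definition block_count :: "(nat \<Rightarrow> 'a) \<Rightarrow> nat \<Rightarrow> nat \<Rightarrow> 'a list \<Rightarrow> nat" where
  "block_count x L J w = card {j. j < J \<and> aligned_block x L j = w}"

lemma factor_prefix_word_eq_aligned_block:
  assumes "j * L + L \<le> n"
  shows "factor (prefix_word x n) (j * L + 1) (j * L + L) = aligned_block x L j"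
  using assms by (auto simp: factor_def prefix_word_def aligned_block_def list_eq_iff_nth_eq)

lemma aligned_occ_prefix_word:
  assumes "length w = L" "L \<ge> 1"
  shows "aligned_occ (prefix_word x n) w = block_count x L (n div L) w"
proof -
  have fits: "j * L + L \<le> n \<longleftrightarrow> j < n div L" for j
    using assms less_eq_div_iff_mult_less_eq[of L "Suc j" n] by auto
  have "{i. 1 \<le> i \<and> i + length w - 1 \<le> length (prefix_word x n) \<and>
          factor (prefix_word x n) i (i + length w - 1) = w \<and> i mod length w = 1 mod length w}
      = (\<lambda>j. j * L + 1) ` {j. j < n div L \<and> aligned_block x L j = w}" (is "?S = ?T")
  proof (intro equalityI subsetI)
    fix i assume i: "i \<in> ?S"
    then have "L dvd i - 1"
      using assms mod_eq_dvd_iff_nat[of 1 i L] by auto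
    then obtain j where "i - 1 = L * j"
      by (rule dvdE)
    moreover have "1 \<le> i"
      using i by blast
    ultimately have "i = j * L + 1"
      by (simp add: mult.commute)
    then show "i \<in> ?T"
      using i assms fits factor_prefix_word_eq_aligned_block[of j L n x]
      by (auto simp: prefix_word_def)
  next
    fix i assume "i \<in> ?T"
    then obtain j where j: "j < n div L" "aligned_block x L j = w" "i = j * L + 1"
      by blast
    moreover have "i + length w - 1 = j * L + L"
      using j assms by simp
    ultimately show "i \<in> ?S"
      using assms fits[of j] factor_prefix_word_eq_aligned_block[of j L n x]
      by (simp add: prefix_word_def mod_Suc)
  qed
  moreover have "inj_on (\<lambda>j. j * L + 1) {j. j < n div L \<and> aligned_block x L j = w}"
    using assms by (auto simp: inj_on_def)
  ultimately show ?thesis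
    unfolding aligned_occ_def block_count_def by (simp add: card_image)
qed

definition words :: "'a set \<Rightarrow> nat \<Rightarrow> 'a list set" where
  "words A n = {w. set w \<subseteq> A \<and> length w = n}"

lemma finite_words: "finite A \<Longrightarrow> finite (words A n)"
  unfolding words_def by (rule finite_lists_length_eq)

lemma card_words: "finite A \<Longrightarrow> card (words A n) = card A ^ n"
  unfolding words_def by (rule card_lists_length_eq)

lemma aligned_block_in_words: "(\<And>n. x n \<in> A) \<Longrightarrow> aligned_block x L j \<in> words A L"
  by (auto simp: words_def aligned_block_def)

lemma card_words_fixed_positions:
  assumes "finite A" "P \<subseteq> {..<n}" "\<And>i. i \<in> P \<Longrightarrow> g i \<in> A"
  shows "card {w \<in> words A n. \<forall>i\<in>P. w ! i = g i} = card A ^ (n - card P)"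
proof -
  let ?S = "{w \<in> words A n. \<forall>i\<in>P. w ! i = g i}"
  let ?Q = "{..<n} - P"
  have "bij_betw (\<lambda>w. restrict (nth w) ?Q) ?S (PiE ?Q (\<lambda>_. A))"
  proof (rule bij_betwI')
    fix w v assume "w \<in> ?S" "v \<in> ?S"
    then show "(restrict (nth w) ?Q = restrict (nth v) ?Q) = (w = v)"
      by (auto simp: words_def list_eq_iff_nth_eq fun_eq_iff)
  next
    fix w assume "w \<in> ?S"
    then show "restrict (nth w) ?Q \<in> PiE ?Q (\<lambda>_. A)"
      by (auto simp: words_def subset_iff)
  next
    fix f assume f: "f \<in> PiE ?Q (\<lambda>_. A)"
    define w where "w = map (\<lambda>i. if i \<in> P then g i else f i) [0..<n]"
    have "w \<in> ?S"
      using f assms unfolding w_def by (auto simp: words_def PiE_def Pi_def set_conv_nth)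
    moreover have "f = restrict (nth w) ?Q"
      using f unfolding w_def by (auto simp: PiE_def extensional_def fun_eq_iff)
    ultimately show "\<exists>w\<in>?S. f = restrict (nth w) ?Q" by blast
  qed
  then have "card ?S = card A ^ card ?Q"
    by (simp add: bij_betw_same_card card_PiE)
  also have "card ?Q = n - card P"
    using assms(2) by (simp add: card_Diff_subset finite_subset)
  finally show ?thesis .
qed

definition occurs_at :: "'a list \<Rightarrow> 'a list \<Rightarrow> nat \<Rightarrow> bool" where
  "occurs_at u w r \<longleftrightarrow> (\<forall>i<length u. w ! (r + i) = u ! i)"

lemma occurs_at_iff: "occurs_at u w r \<longleftrightarrow> (\<forall>i\<in>{r..<r + length u}. w ! i = u ! (i - r))"
  unfolding occurs_at_def by (metis add.commute add_diff_cancel_left' atLeastLessThan_iff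
      le_add1 le_add_diff_inverse nat_add_left_cancel_less)

lemma card_words_occurs_at:
  assumes "finite A" "set u \<subseteq> A" "r + length u \<le> n"
  shows "card {w \<in> words A n. occurs_at u w r} = card A ^ (n - length u)"
proof -
  have "{r..<r + length u} \<subseteq> {..<n}"
    using assms(3) by auto
  moreover have "u ! (i - r) \<in> A" if "i \<in> {r..<r + length u}" for i
    using that assms(2) nth_mem[of "i - r" u] by auto
  ultimately have "card {w \<in> words A n. \<forall>i\<in>{r..<r + length u}. w ! i = u ! (i - r)}
      = card A ^ (n - length u)"
    using card_words_fixed_positions[OF assms(1), of "{r..<r + length u}" n "\<lambda>i. u ! (i - r)"]
    by simp
  then show ?thesis
    by (simp only: occurs_at_iff)
qed

lemma card_words_occurs_at_twice:
  assumes "finite A" "set u \<subseteq> A" "r + length u \<le> r'" "r' + length u \<le> n"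
  shows "card {w \<in> words A n. occurs_at u w r \<and> occurs_at u w r'} = card A ^ (n - 2 * length u)"
proof -
  let ?k = "length u"
  let ?P = "{r..<r + ?k} \<union> {r'..<r' + ?k}"
  let ?g = "\<lambda>i. if i < r + ?k then u ! (i - r) else u ! (i - r')"
  have "occurs_at u w r \<and> occurs_at u w r' \<longleftrightarrow> (\<forall>i\<in>?P. w ! i = ?g i)" for w
    using assms(3) unfolding occurs_at_iff ball_Un by (intro conj_cong ball_cong) auto
  then have "{w \<in> words A n. occurs_at u w r \<and> occurs_at u w r'}
      = {w \<in> words A n. \<forall>i\<in>?P. w ! i = ?g i}"
    by blast
  moreover have "card ?P = 2 * ?k"
    using assms(3) by (subst card_Un_disjoint) auto
  moreover have "?g i \<in> A" if "i \<in> ?P" for i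
    using that assms(2,3) nth_mem[of "i - r" u] nth_mem[of "i - r'" u] by auto
  moreover have "?P \<subseteq> {..<n}"
    using assms(3,4) by auto
  ultimately show ?thesis
    using card_words_fixed_positions[OF assms(1), of ?P n ?g] by simp
qed

definition shifted_occ :: "'a list \<Rightarrow> nat \<Rightarrow> 'a list \<Rightarrow> nat" where
  "shifted_occ u s w =
     card {t. t < (length w - s) div length u \<and> occurs_at u w (s + t * length u)}"

lemma shifted_occ_eq_sum:
  "real (shifted_occ u s w) =
     (\<Sum>t<(length w - s) div length u. of_bool (occurs_at u w (s + t * length u)))"
  by (simp add: shifted_occ_def Int_def)

lemma shifted_slot_fits:
  fixes k :: nat
  assumes "t < (n - s) div k"
  shows "s + t * k + k \<le> n"
proof -
  have "Suc t * k \<le> n - s"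
    using assms less_eq_div_iff_mult_less_eq[of k "Suc t" "n - s"] by (cases "k = 0") auto
  moreover have "n - s > 0"
    using assms by (metis div_0 gr0I less_nat_zero_code)
  ultimately show ?thesis by simp
qed

lemma sum_words_occurs_at_slots:
  assumes "finite A" "A \<noteq> {}" "set u \<subseteq> A" "length u = k"
    and "t < (n - s) div k" "t' < (n - s) div k"
  shows "(\<Sum>w\<in>words A n. of_bool (occurs_at u w (s + t * k) \<and> occurs_at u w (s + t' * k)))
    = real (card A) ^ n / (real (card A) ^ k) ^ (if t = t' then 1 else 2)"
proof -
  let ?b = "real (card A)"
  have "?b \<noteq> 0"
    using assms(1,2) by simp
  have fits: "s + t * k + k \<le> n" "s + t' * k + k \<le> n"
    using shifted_slot_fits assms(5,6) by auto
  show ?thesis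
  proof (cases "t = t'")
    case True
    then have "(\<Sum>w\<in>words A n. of_bool (occurs_at u w (s + t * k) \<and> occurs_at u w (s + t' * k)))
        = real (card {w \<in> words A n. occurs_at u w (s + t * k)})"
      using finite_words[OF assms(1)] by (simp add: Int_def)
    also have "\<dots> = ?b ^ (n - k)"
      using card_words_occurs_at[OF assms(1,3), of "s + t * k" n] fits assms(4) by simp
    finally show ?thesis
      using True fits \<open>?b \<noteq> 0\<close> by (simp add: power_diff)
  next
    case False
    define r where "r = min (s + t * k) (s + t' * k)"
    define r' where "r' = max (s + t * k) (s + t' * k)"
    have "a * k + k \<le> b * k" if "a < b" for a b
      using mult_le_mono1[OF Suc_leI[OF that], of k] by simp
    then have "r + k \<le> r'"
      using False unfolding r_def r'_def by (cases "t < t'") auto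
    have "(\<Sum>w\<in>words A n. of_bool (occurs_at u w (s + t * k) \<and> occurs_at u w (s + t' * k)))
        = real (card {w \<in> words A n. occurs_at u w r \<and> occurs_at u w r'})"
      using finite_words[OF assms(1)] unfolding r_def r'_def
      by (simp add: Int_def min_def max_def conj_commute)
    also have "\<dots> = ?b ^ (n - 2 * k)"
      using card_words_occurs_at_twice[OF assms(1,3), of r r' n] \<open>r + k \<le> r'\<close> fits assms(4)
      unfolding r'_def by simp
    finally show ?thesis
      using False fits \<open>?b \<noteq> 0\<close> \<open>r + k \<le> r'\<close> unfolding r'_def
      by (simp add: power_diff power_mult[symmetric] mult.commute)
  qed
qed

text \<open>Occurrences in disjoint slots are independent for the uniform distribution on words, so this
  is the variance of a binomial count.\<close>
lemma sum_sq_deviation_shifted_occ: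
  fixes n s k :: nat
  assumes "finite A" "A \<noteq> {}" "set u \<subseteq> A" "length u = k"
  defines "m \<equiv> (n - s) div k" and "p \<equiv> 1 / real (card A) ^ k"
  shows "(\<Sum>w\<in>words A n. (real (shifted_occ u s w) - real m * p)\<^sup>2)
    = real (card A) ^ n * real m * p * (1 - p)"
proof -
  let ?B = "real (card A) ^ n"
  let ?W = "words A n"
  let ?X = "\<lambda>t w. of_bool (occurs_at u w (s + t * k)) :: real"
  have occ: "real (shifted_occ u s w) = (\<Sum>t<m. ?X t w)" if "w \<in> ?W" for w
    using that shifted_occ_eq_sum[of u s w] assms(4) by (simp add: words_def m_def)
  have pair: "(\<Sum>w\<in>?W. ?X t w * ?X t' w) = ?B * p ^ (if t = t' then 1 else 2)"
    if "t < m" "t' < m" for t t'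
    using sum_words_occurs_at_slots[OF assms(1-4), of t n s t'] that
    by (simp add: of_bool_conj m_def p_def power_one_over)
  have first: "(\<Sum>w\<in>?W. real (shifted_occ u s w)) = m * ?B * p"
  proof -
    have "(\<Sum>w\<in>?W. real (shifted_occ u s w)) = (\<Sum>w\<in>?W. \<Sum>t<m. ?X t w * ?X t w)"
      by (intro sum.cong refl) (simp only: occ of_bool_conj[symmetric] conj_absorb)
    also have "\<dots> = (\<Sum>t<m. \<Sum>w\<in>?W. ?X t w * ?X t w)"
      by (rule sum.swap)
    also have "\<dots> = (\<Sum>t<m. ?B * p)"
      using pair by simp
    finally show ?thesis by simp
  qed
  have second: "(\<Sum>w\<in>?W. (real (shifted_occ u s w))\<^sup>2) = m * ?B * p + m * (real m - 1) * ?B * p\<^sup>2"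
  proof -
    have "(\<Sum>w\<in>?W. (real (shifted_occ u s w))\<^sup>2) = (\<Sum>w\<in>?W. \<Sum>t<m. \<Sum>t'<m. ?X t w * ?X t' w)"
      by (intro sum.cong refl) (simp only: occ power2_eq_square sum_product)
    also have "\<dots> = (\<Sum>t<m. \<Sum>t'<m. \<Sum>w\<in>?W. ?X t w * ?X t' w)"
      by (simp only: sum.swap[of _ ?W])
    also have "\<dots> = (\<Sum>t<m. \<Sum>t'<m. ?B * p\<^sup>2 + (if t = t' then ?B * p - ?B * p\<^sup>2 else 0))"
      using pair by (intro sum.cong) auto
    also have "\<dots> = (\<Sum>t<m. m * ?B * p\<^sup>2 + (?B * p - ?B * p\<^sup>2))"
      by (intro sum.cong refl) (simp add: sum.distrib)
    finally show ?thesis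
      by (simp add: algebra_simps)
  qed
  have "(\<Sum>w\<in>?W. (real (shifted_occ u s w) - m * p)\<^sup>2)
      = (\<Sum>w\<in>?W. (real (shifted_occ u s w))\<^sup>2) - 2 * (m * p) * (\<Sum>w\<in>?W. real (shifted_occ u s w))
        + real (card ?W) * (m * p)\<^sup>2"
    by (simp add: power2_diff sum.distrib sum_subtractf sum_distrib_left algebra_simps)
  also have "\<dots> = ?B * m * p * (1 - p)"
    unfolding first second card_words[OF assms(1)] by (simp add: power2_eq_square algebra_simps)
  finally show ?thesis .
qed

definition nested_count :: "(nat \<Rightarrow> 'a) \<Rightarrow> 'a list \<Rightarrow> nat \<Rightarrow> nat \<Rightarrow> nat" where
  "nested_count x u l j = card {i. j * l \<le> i * length u \<and> i * length u + length u \<le> j * l + l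
                                  \<and> aligned_block x (length u) i = u}"

text \<open>The \<open>k\<close>-blocks that start inside the \<open>l\<close>-block number \<open>i k div l\<close> but stick out of it:
  only the last \<open>k\<close>-block starting in an \<open>l\<close>-block can do so.\<close>
lemma card_straddling_blocks_le:
  fixes k l M :: nat
  assumes "l \<ge> 1"
  shows "card {i. i < M \<and> (i * k div l) * l + l < i * k + k} \<le> M * k div l + 1"
    (is "card ?N \<le> _")
proof -
  have separated: "a * k div l \<noteq> b * k div l" if "a \<in> ?N" "a < b" for a b
  proof
    assume eq: "a * k div l = b * k div l"
    have "a * k + k \<le> b * k"
      using mult_le_mono1[OF Suc_leI[OF \<open>a < b\<close>], of k] by simp
    moreover have "b * k < (b * k div l) * l + l"
      using assms div_mult_mod_eq[of "b * k" l] mod_less_divisor[of l "b * k"] by linarith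
    ultimately show False
      using that(1) eq by simp
  qed
  have inj: "inj_on (\<lambda>i. i * k div l) ?N"
  proof (rule inj_onI)
    fix a b assume "a \<in> ?N" "b \<in> ?N" "a * k div l = b * k div l"
    then show "a = b"
      using separated[of a b] separated[of b a] by (metis linorder_neqE_nat)
  qed
  have "(\<lambda>i. i * k div l) ` ?N \<subseteq> {..<M * k div l + 1}"
  proof (rule image_subsetI)
    fix i assume "i \<in> ?N"
    then have "i * k div l \<le> M * k div l"
      by (intro div_le_mono) simp
    then show "i * k div l \<in> {..<M * k div l + 1}"
      by simp
  qed
  then have "card ?N \<le> card {..<M * k div l + 1}"
    by (rule card_inj_on_le[OF inj]) simp
  then show ?thesis
    by simp
qed

lemma block_count_le_sum_nested_count:
  fixes k l M :: nat
  assumes "length u = k" "k \<ge> 1" "l \<ge> 1"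
  defines "J \<equiv> M * k div l + 1"
  shows "block_count x k M u \<le> (\<Sum>j<J. nested_count x u l j) + J"
proof -
  let ?I = "\<lambda>j. {i. j * l \<le> i * k \<and> i * k + k \<le> j * l + l \<and> aligned_block x k i = u}"
  let ?N = "{i. i < M \<and> (i * k div l) * l + l < i * k + k}"
  have "?I j \<subseteq> {..j * l + l}" for j
  proof
    fix i assume "i \<in> ?I j"
    then have "i * k + k \<le> j * l + l"
      by simp
    moreover have "i \<le> i * k"
      using assms(2) by simp
    ultimately show "i \<in> {..j * l + l}"
      by (simp only: atMost_iff)
  qed
  then have "finite (?I j)" for j
    by (rule finite_subset) simp
  moreover have "{i. i < M \<and> aligned_block x k i = u} \<subseteq> (\<Union>j<J. ?I j) \<union> ?N"
  proof
    fix i assume i: "i \<in> {i. i < M \<and> aligned_block x k i = u}"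
    have "i * k div l < J"
      using i div_le_mono[of "i * k" "M * k" l] unfolding J_def by simp
    have "(i * k div l) * l \<le> i * k"
      by (rule div_times_less_eq_dividend)
    show "i \<in> (\<Union>j<J. ?I j) \<union> ?N"
    proof (cases "i \<in> ?N")
      case False
      then have "i \<in> ?I (i * k div l)"
        using i \<open>(i * k div l) * l \<le> i * k\<close> by (simp add: not_less)
      then show ?thesis
        using \<open>i * k div l < J\<close> by blast
    qed simp
  qed
  ultimately have "block_count x k M u \<le> card (\<Union>j<J. ?I j) + card ?N"
    unfolding block_count_def
    by (intro le_trans[OF card_mono card_Un_le]) auto
  also have "card (\<Union>j<J. ?I j) \<le> (\<Sum>j<J. nested_count x u l j)"
    unfolding nested_count_def assms(1) by (rule card_UN_le) simp
  also have "card ?N \<le> J"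
    unfolding J_def by (rule card_straddling_blocks_le[OF assms(3)])
  finally show ?thesis by simp
qed

lemma least_multiple_ge:
  fixes a k :: nat
  assumes "k \<ge> 1"
  obtains i0 where "a \<le> i0 * k" "i0 * k < a + k" "\<And>i. a \<le> i * k \<Longrightarrow> i0 \<le> i"
proof
  let ?i0 = "LEAST i. a \<le> i * k"
  show "a \<le> ?i0 * k"
    by (rule LeastI[of _ a]) (use assms in simp)
  show least: "?i0 \<le> i" if "a \<le> i * k" for i
    using that by (rule Least_le)
  show "?i0 * k < a + k"
  proof (cases ?i0)
    case (Suc i)
    then have "\<not> a \<le> i * k"
      using least[of i] by auto
    then show ?thesis
      using Suc by simp
  qed (use assms in simp)
qed

lemma occurs_at_aligned_block:
  assumes "aligned_block x k i = u" "i * k = j * l + r" "r + k \<le> l"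
  shows "occurs_at u (aligned_block x l j) r"
  unfolding occurs_at_def
proof (intro allI impI)
  fix q assume "q < length u"
  then have "q < k"
    using assms(1) by auto
  then have "aligned_block x l j ! (r + q) = x (i * k + q)"
    using assms(2,3) by (simp add: nth_aligned_block add.assoc)
  also have "\<dots> = u ! q"
    using \<open>q < k\<close> assms(1) by (auto simp: nth_aligned_block)
  finally show "aligned_block x l j ! (r + q) = u ! q" .
qed

text \<open>The \<open>k\<close>-aligned positions inside an \<open>l\<close>-block all have the same offset \<open>s\<close> modulo \<open>k\<close>
  relative to the start of that block.\<close>
lemma nested_count_le_shifted_occ:
  assumes "length u = k" "k \<ge> 1"
  shows "\<exists>s<k. nested_count x u l j \<le> shifted_occ u s (aligned_block x l j)"
proof -
  let ?I = "{i. j * l \<le> i * k \<and> i * k + k \<le> j * l + l \<and> aligned_block x k i = u}"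
  obtain i0 where i0: "j * l \<le> i0 * k" "i0 * k < j * l + k"
    and i0_le: "\<And>i. j * l \<le> i * k \<Longrightarrow> i0 \<le> i"
    using least_multiple_ge[OF assms(2)] by blast
  define s where "s = i0 * k - j * l"
  have "s < k"
    using i0 unfolding s_def by (simp add: less_diff_conv2)
  let ?T = "{t. t < (l - s) div k \<and> occurs_at u (aligned_block x l j) (s + t * k)}"
  have image: "(\<lambda>i. i - i0) ` ?I \<subseteq> ?T"
  proof (rule image_subsetI)
    fix i assume "i \<in> ?I"
    then have i: "j * l \<le> i * k" "i * k + k \<le> j * l + l" "aligned_block x k i = u"
      by auto
    have pos: "i * k = j * l + (s + (i - i0) * k)"
      using i0_le[OF i(1)] i0(1) i(1) unfolding s_def by (simp add: diff_mult_distrib)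
    then have "Suc (i - i0) * k \<le> l - s"
      using i(2) by simp
    then have "i - i0 < (l - s) div k"
      using assms(2) less_eq_div_iff_mult_less_eq[of k "Suc (i - i0)" "l - s"] by simp
    moreover have "occurs_at u (aligned_block x l j) (s + (i - i0) * k)"
      using i(2) pos by (intro occurs_at_aligned_block[OF i(3)]) simp_all
    ultimately show "i - i0 \<in> ?T" by simp
  qed
  have "inj_on (\<lambda>i. i - i0) ?I"
    using i0_le by (intro inj_on_diff_nat) blast
  then have "card ?I \<le> card ?T"
    using image by (rule card_inj_on_le) simp
  moreover have "nested_count x u l j = card ?I" "shifted_occ u s (aligned_block x l j) = card ?T"
    unfolding nested_count_def shifted_occ_def assms(1) by simp_all
  ultimately show ?thesis
    using \<open>s < k\<close> by auto
qed

lemma sum_aligned_blocks: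
  assumes "finite A" "\<And>n. x n \<in> A"
  shows "(\<Sum>j<J. g (aligned_block x l j)) = (\<Sum>w\<in>words A l. real (block_count x l J w) * g w)"
proof -
  have "(\<Sum>j<J. g (aligned_block x l j))
      = (\<Sum>w\<in>words A l. \<Sum>j\<in>{j\<in>{..<J}. aligned_block x l j = w}. g (aligned_block x l j))"
    using aligned_block_in_words[OF assms(2)] finite_words[OF assms(1)]
    by (intro sum.group[symmetric]) auto
  also have "\<dots> = (\<Sum>w\<in>words A l. real (block_count x l J w) * g w)"
    unfolding block_count_def by (intro sum.cong refl) simp
  finally show ?thesis .
qed

lemma sum_block_count:
  assumes "finite A" "\<And>n. x n \<in> A"
  shows "(\<Sum>w\<in>words A l. real (block_count x l J w)) = real J"
  using sum_aligned_blocks[OF assms, where g = "\<lambda>_. 1" and J = J and l = l] by simp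

lemma sum_aligned_blocks_le:
  assumes "finite A" "\<And>n. x n \<in> A"
    and "\<And>w. w \<in> words A l \<Longrightarrow> real (block_count x l J w) \<le> c"
    and "\<And>w. w \<in> words A l \<Longrightarrow> g w \<ge> 0"
  shows "(\<Sum>j<J. g (aligned_block x l j)) \<le> c * (\<Sum>w\<in>words A l. g w)"
proof -
  have "(\<Sum>j<J. g (aligned_block x l j)) = (\<Sum>w\<in>words A l. real (block_count x l J w) * g w)"
    by (rule sum_aligned_blocks[OF assms(1,2)])
  also have "\<dots> \<le> (\<Sum>w\<in>words A l. c * g w)"
    using assms(3,4) by (intro sum_mono mult_right_mono) auto
  finally show ?thesis
    by (simp add: sum_distrib_left)
qed

text \<open>Either \<open>c\<close> is within \<open>\<eta> m\<close> of its mean \<open>m p\<close>, or the squared deviation pays for it.\<close>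
lemma le_bound_plus_sq_deviation:
  fixes c m m0 \<eta> p L :: real
  assumes "0 < m0" "m0 \<le> m" "m \<le> L" "0 < \<eta>" "0 \<le> p"
  shows "c \<le> L * (p + \<eta>) + (c - m * p)\<^sup>2 / (\<eta> * m0)"
proof (cases "c - m * p \<le> \<eta> * m")
  case True
  then have "c \<le> m * (p + \<eta>)"
    by (simp add: algebra_simps)
  also have "\<dots> \<le> L * (p + \<eta>)"
    using assms by (intro mult_right_mono) auto
  finally show ?thesis
    using assms by (smt (verit) divide_nonneg_pos mult_pos_pos zero_le_power2)
next
  case False
  have "0 < \<eta> * m0"
    using assms by simp
  have "\<eta> * m0 \<le> c - m * p"
    using False assms by (smt (verit) mult_left_mono)
  then have "(c - m * p) * (\<eta> * m0) \<le> (c - m * p)\<^sup>2"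
    unfolding power2_eq_square using \<open>0 < \<eta> * m0\<close> by (intro mult_left_mono) auto
  then have "c - m * p \<le> (c - m * p)\<^sup>2 / (\<eta> * m0)"
    using \<open>0 < \<eta> * m0\<close> by (simp add: le_divide_eq)
  moreover have "m * p \<le> L * (p + \<eta>)"
    using assms by (smt (verit) mult_mono mult_nonneg_nonneg)
  ultimately show ?thesis by simp
qed

lemma half_divide_le_div:
  fixes l k s :: nat
  assumes "s < k" "4 * k \<le> l"
  shows "real l / (2 * real k) \<le> real ((l - s) div k)"
proof -
  have "(l - s) mod k < k"
    using assms(1) by simp
  then have "l - s < (l - s) div k * k + k"
    using div_mult_mod_eq[of "l - s" k] by linarith
  then have "real l - real s < real ((l - s) div k) * real k + real k"
    using assms by (simp flip: of_nat_mult of_nat_add of_nat_diff)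
  then have "real l < (real ((l - s) div k) + 2) * real k"
    using assms(1) by (simp add: algebra_simps)
  moreover have "4 * real k \<le> real l"
    using assms(2) by simp
  ultimately show ?thesis
    using assms(1) by (simp add: field_simps)
qed

definition shifted_deviation :: "real \<Rightarrow> 'a list \<Rightarrow> 'a list \<Rightarrow> real" where
  "shifted_deviation p u w =
     (\<Sum>s<length u. (real (shifted_occ u s w) - real ((length w - s) div length u) * p)\<^sup>2)"

lemma shifted_deviation_nonneg: "shifted_deviation p u w \<ge> 0"
  unfolding shifted_deviation_def by (intro sum_nonneg) simp

lemma sum_shifted_deviation_le:
  assumes "finite A" "A \<noteq> {}" "set u \<subseteq> A"
  defines "p \<equiv> 1 / real (card A) ^ length u"
  shows "(\<Sum>w\<in>words A l. shifted_deviation p u w) \<le> real (card A) ^ l * real l"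
proof -
  let ?k = "length u"
  let ?B = "real (card A) ^ l"
  have "0 \<le> p" "p \<le> 1"
    using assms(1,2) unfolding p_def by (simp_all add: Suc_le_eq card_gt_0_iff)
  then have "p * (1 - p) \<le> 1"
    by (smt (verit) mult_le_one)
  have "(\<Sum>w\<in>words A l. shifted_deviation p u w)
      = (\<Sum>s<?k. \<Sum>w\<in>words A l. (real (shifted_occ u s w) - real ((l - s) div ?k) * p)\<^sup>2)"
    unfolding shifted_deviation_def by (subst sum.swap) (simp add: words_def)
  also have "\<dots> = (\<Sum>s<?k. ?B * real ((l - s) div ?k) * (p * (1 - p)))"
    using sum_sq_deviation_shifted_occ[OF assms(1-3) refl] by (simp add: p_def)
  also have "\<dots> \<le> (\<Sum>s<?k. ?B * (real l / real ?k))"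
  proof (intro sum_mono)
    fix s
    have "real ((l - s) div ?k) * (p * (1 - p)) \<le> real ((l - s) div ?k)"
      using \<open>0 \<le> p\<close> \<open>p \<le> 1\<close> \<open>p * (1 - p) \<le> 1\<close> by (simp add: mult_left_le)
    also have "\<dots> \<le> real (l - s) / real ?k"
      by (rule of_nat_div_le_of_nat)
    also have "\<dots> \<le> real l / real ?k"
      by (simp add: divide_right_mono)
    finally show "?B * real ((l - s) div ?k) * (p * (1 - p)) \<le> ?B * (real l / real ?k)"
      unfolding mult.assoc by (rule mult_left_mono) simp
  qed
  also have "\<dots> \<le> ?B * real l"
    by (cases "?k = 0") simp_all
  finally show ?thesis .
qed

lemma nested_count_le_deviation:
  assumes "length u = k" "k \<ge> 1" "4 * k \<le> l" "0 < \<eta>" "0 \<le> p"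
  shows "real (nested_count x u l j)
    \<le> real l / real k * (p + \<eta>) + 2 * real k * shifted_deviation p u (aligned_block x l j) / (\<eta> * real l)"
proof -
  obtain s where "s < k" and nested: "nested_count x u l j \<le> shifted_occ u s (aligned_block x l j)"
    using nested_count_le_shifted_occ[OF assms(1,2)] by blast
  let ?c = "real (shifted_occ u s (aligned_block x l j))"
  let ?d = "real ((l - s) div k)"
  let ?h = "real l / (2 * real k)"
  have "0 < ?h"
    using assms(2,3) by simp
  have bound: "?c \<le> real l / real k * (p + \<eta>) + (?c - ?d * p)\<^sup>2 / (\<eta> * ?h)"
    using \<open>0 < ?h\<close> half_divide_le_div[OF \<open>s < k\<close> assms(3)] of_nat_div_le_of_nat[of "l - s" k]
      assms(4,5)
    by (intro le_bound_plus_sq_deviation) (auto intro: order_trans[OF _ divide_right_mono])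
  have "(?c - ?d * p)\<^sup>2
      \<le> (\<Sum>s<k. (real (shifted_occ u s (aligned_block x l j)) - real ((l - s) div k) * p)\<^sup>2)"
    by (rule member_le_sum[where f = "\<lambda>s. (real (shifted_occ u s (aligned_block x l j)) - real ((l - s) div k) * p)\<^sup>2"])
      (use \<open>s < k\<close> in simp_all)
  also have "\<dots> = shifted_deviation p u (aligned_block x l j)"
    unfolding shifted_deviation_def assms(1) by simp
  finally have "(?c - ?d * p)\<^sup>2 / (\<eta> * ?h) \<le> shifted_deviation p u (aligned_block x l j) / (\<eta> * ?h)"
    by (rule divide_right_mono) (use \<open>0 < ?h\<close> assms(4) in simp)
  also have "\<dots> = 2 * real k * shifted_deviation p u (aligned_block x l j) / (\<eta> * real l)"
    using assms(2) by (simp add: field_simps)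
  finally show ?thesis
    using bound nested by linarith
qed

lemma block_count_le_of_frequency_bound:
  fixes M k l J :: nat and C \<eta> :: real
  assumes A: "finite A" "\<And>n. x n \<in> A"
    and u: "set u \<subseteq> A" "length u = k" "k \<ge> 1"
    and "4 * k \<le> l" "0 < \<eta>" "0 \<le> C"
    and J: "J = M * k div l + 1"
    and freq: "\<And>w. w \<in> words A l \<Longrightarrow> real (block_count x l J w) \<le> C / real (card A) ^ l * real J"
  defines "p \<equiv> 1 / real (card A) ^ k"
  shows "real (block_count x k M u)
    \<le> real J * (real l / real k * (p + \<eta>) + 2 * real k * C / \<eta> + 1)"
proof -
  let ?D = "shifted_deviation p u"
  have "A \<noteq> {}" "0 \<le> p" "real l > 0"
    using A(2) \<open>4 * k \<le> l\<close> u(3) unfolding p_def by auto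
  have "real (block_count x k M u) \<le> (\<Sum>j<J. real (nested_count x u l j)) + real J"
    using block_count_le_sum_nested_count[OF u(2,3), where l = l and M = M and x = x]
      \<open>4 * k \<le> l\<close> u(3) J
    by (simp flip: of_nat_sum of_nat_add)
  moreover have "(\<Sum>j<J. real (nested_count x u l j))
      \<le> real J * (real l / real k * (p + \<eta>)) + 2 * real k / (\<eta> * real l) * (\<Sum>j<J. ?D (aligned_block x l j))"
  proof -
    have "(\<Sum>j<J. real (nested_count x u l j))
        \<le> (\<Sum>j<J. real l / real k * (p + \<eta>) + 2 * real k / (\<eta> * real l) * ?D (aligned_block x l j))"
      using nested_count_le_deviation[OF u(2,3) \<open>4 * k \<le> l\<close> \<open>0 < \<eta>\<close> \<open>0 \<le> p\<close>]
      by (intro sum_mono) (simp add: field_simps)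
    then show ?thesis
      by (simp add: sum.distrib sum_distrib_left)
  qed
  moreover have "(\<Sum>j<J. ?D (aligned_block x l j)) \<le> C * real J * real l"
  proof -
    have "(\<Sum>j<J. ?D (aligned_block x l j)) \<le> C / real (card A) ^ l * real J * (\<Sum>w\<in>words A l. ?D w)"
      using freq shifted_deviation_nonneg by (intro sum_aligned_blocks_le[OF A])
    also have "\<dots> \<le> C / real (card A) ^ l * real J * (real (card A) ^ l * real l)"
      using sum_shifted_deviation_le[OF A(1) \<open>A \<noteq> {}\<close> u(1)] \<open>0 \<le> C\<close>
      unfolding p_def u(2) by (intro mult_left_mono) simp_all
    also have "\<dots> = C * real J * real l"
      using A(1) \<open>A \<noteq> {}\<close> by simp
    finally show ?thesis .
  qed
  then have "2 * real k / (\<eta> * real l) * (\<Sum>j<J. ?D (aligned_block x l j)) \<le> real J * (2 * real k * C / \<eta>)"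
    using \<open>0 < \<eta>\<close> \<open>real l > 0\<close>
    by (auto simp: field_simps intro: order_trans[OF mult_left_mono])
  ultimately show ?thesis
    by (simp add: algebra_simps)
qed

lemma eventually_block_count_le_of_limsup:
  assumes "length w = l" "l \<ge> 1"
    and "limsup (\<lambda>N. ereal (real (aligned_occ (prefix_word x (l * N)) w) / real N)) < ereal c"
  shows "eventually (\<lambda>N. real (block_count x l N w) \<le> c * real N) sequentially"
  using Limsup_lessD[OF assms(3)] eventually_gt_at_top[of 0]
proof eventually_elim
  case (elim N)
  then have "real (block_count x l N w) / real N < c"
    using aligned_occ_prefix_word[OF assms(1,2), of x "l * N"] assms(2) by simp
  then show ?case
    using elim(2) by (simp add: divide_less_eq less_imp_le)
qed

lemma blocks_times_bound_le:
  fixes k l M J :: nat and p \<eta> K0 :: real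
  assumes "k \<ge> 1" "l \<ge> 1" "J = M * k div l + 1" "0 \<le> K0" "0 \<le> p" "0 < \<eta>"
    and "real k * K0 \<le> \<eta> * real l" "real l / real k * (p + \<eta>) + K0 \<le> \<eta> * real M"
  shows "real J * (real l / real k * (p + \<eta>) + K0) \<le> (p + 3 * \<eta>) * real M"
proof -
  let ?K = "real l / real k * (p + \<eta>) + K0"
  have "real J \<le> real M * real k / real l + 1"
    using of_nat_div_le_of_nat[of "M * k" l] assms(3) by simp
  then have "real J * ?K \<le> (real M * real k / real l + 1) * ?K"
    by (rule mult_right_mono) (use assms(4-6) in simp)
  also have "\<dots> = real M * (p + \<eta>) + real M * (real k * K0 / real l) + ?K"
    using assms(1,2) by (simp add: field_simps)
  also have "real M * (real k * K0 / real l) \<le> real M * \<eta>"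
    using assms(2,7) by (intro mult_left_mono) (simp_all add: divide_le_eq mult.commute)
  finally show ?thesis
    using assms(8) by (simp add: algebra_simps)
qed

lemma eventually_block_count_le_of_level:
  fixes k l :: nat and C \<eta> :: real
  assumes A: "finite A" "\<And>n. x n \<in> A"
    and u: "set u \<subseteq> A" "length u = k" "k \<ge> 1"
    and "4 * k \<le> l" "0 < \<eta>" "0 \<le> C"
    and l_large: "real k * (2 * real k * C / \<eta> + 1) \<le> \<eta> * real l"
    and freq: "eventually (\<lambda>N. \<forall>w\<in>words A l. real (block_count x l N w) \<le> C / real (card A) ^ l * real N)
                 sequentially"
  defines "p \<equiv> 1 / real (card A) ^ k"
  shows "eventually (\<lambda>M. real (block_count x k M u) \<le> (p + 3 * \<eta>) * real M) sequentially"
proof -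
  define K where "K = real l / real k * (p + \<eta>) + (2 * real k * C / \<eta> + 1)"
  obtain N0 where N0: "\<And>N. N \<ge> N0 \<Longrightarrow>
      \<forall>w\<in>words A l. real (block_count x l N w) \<le> C / real (card A) ^ l * real N"
    using freq unfolding eventually_sequentially by blast
  have "l \<ge> 1" "0 \<le> p"
    using \<open>4 * k \<le> l\<close> u(3) unfolding p_def by auto
  have "eventually (\<lambda>M. K / \<eta> \<le> real M) sequentially"
    using filterlim_real_sequentially unfolding filterlim_at_top by blast
  with eventually_ge_at_top[of "N0 * l"]
  show ?thesis
  proof eventually_elim
    case (elim M)
    define J where "J = M * k div l + 1"
    have "M \<le> M * k"
      using u(3) by simp
    then have "N0 * l div l \<le> M * k div l"
      using elim(1) by (intro div_le_mono) (rule le_trans)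
    then have "N0 \<le> J"
      using \<open>l \<ge> 1\<close> unfolding J_def by simp
    then have "real (block_count x k M u) \<le> real J * K"
      unfolding K_def p_def add.assoc[symmetric]
      by (intro block_count_le_of_frequency_bound[OF A u \<open>4 * k \<le> l\<close> \<open>0 < \<eta>\<close> \<open>0 \<le> C\<close> J_def])
        (use N0 in auto)
    also have "\<dots> \<le> (p + 3 * \<eta>) * real M"
      using elim(2) u(3) \<open>l \<ge> 1\<close> J_def \<open>0 \<le> p\<close> \<open>0 < \<eta>\<close> \<open>0 \<le> C\<close> l_large
      unfolding K_def by (intro blocks_times_bound_le) (simp_all add: divide_le_eq mult.commute)
    finally show ?case .
  qed
qed

lemma eventually_block_count_le:
  fixes C \<epsilon> :: real
  assumes A: "finite A" "\<And>n. x n \<in> A"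
    and u: "set u \<subseteq> A" "length u = k" "k \<ge> 1"
    and "0 < C" "0 < \<epsilon>"
    and levels: "infinite {l::nat. \<forall>w. length w = l \<and> set w \<subseteq> A \<longrightarrow>
          limsup (\<lambda>N. ereal (real (aligned_occ (prefix_word x (l * N)) w) / real N))
            < ereal (C / real (card A) ^ l)}"
  shows "eventually (\<lambda>M. real (block_count x k M u) \<le> (1 / real (card A) ^ k + \<epsilon>) * real M) sequentially"
proof -
  define \<eta> where "\<eta> = \<epsilon> / 3"
  have "0 < \<eta>"
    using \<open>0 < \<epsilon>\<close> unfolding \<eta>_def by simp
  define L where "L = real k * (2 * real k * C / \<eta> + 1) / \<eta>"
  obtain l where l: "max (4 * k) (nat \<lceil>L\<rceil>) \<le> l"
    and level: "\<forall>w. length w = l \<and> set w \<subseteq> A \<longrightarrow>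
          limsup (\<lambda>N. ereal (real (aligned_occ (prefix_word x (l * N)) w) / real N))
            < ereal (C / real (card A) ^ l)"
    using levels unfolding infinite_nat_iff_unbounded_le by blast
  have "real k * (2 * real k * C / \<eta> + 1) \<le> \<eta> * real l"
    using l real_nat_ceiling_ge[of L] \<open>0 < \<eta>\<close> unfolding L_def
    by (simp add: divide_le_eq mult.commute)
  moreover have "eventually (\<lambda>N. \<forall>w\<in>words A l. real (block_count x l N w) \<le> C / real (card A) ^ l * real N)
      sequentially"
    using level l u(3) finite_words[OF A(1)]
    by (intro eventually_ball_finite ballI eventually_block_count_le_of_limsup)
      (auto simp: words_def)
  ultimately have "eventually (\<lambda>M. real (block_count x k M u) \<le> (1 / real (card A) ^ k + 3 * \<eta>) * real M)
      sequentially"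
    using l \<open>0 < \<eta>\<close> \<open>0 < C\<close> by (intro eventually_block_count_le_of_level[OF A u]) auto
  then show ?thesis
    unfolding \<eta>_def by simp
qed

lemma tendsto_frequency_of_upper_bounds:
  fixes c :: "'b \<Rightarrow> nat \<Rightarrow> real"
  assumes "finite W" "u \<in> W"
    and total: "\<And>M. (\<Sum>v\<in>W. c v M) = real M"
    and upper: "\<And>v \<epsilon>. v \<in> W \<Longrightarrow> 0 < \<epsilon> \<Longrightarrow>
       eventually (\<lambda>M. c v M \<le> (1 / real (card W) + \<epsilon>) * real M) sequentially"
  shows "(\<lambda>M. c u M / real M) \<longlonglongrightarrow> 1 / real (card W)"
  unfolding tendsto_iff
proof (intro allI impI)
  fix e :: real assume "0 < e"
  let ?Q = "real (card W)"
  have "card W \<ge> 1"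
    using assms(1,2) by (auto simp: Suc_le_eq card_gt_0_iff)
  then have "?Q \<ge> 1" "W \<noteq> {}"
    by auto
  define d where "d = e / (2 * ?Q)"
  have "0 < d" "d < e" "(?Q - 1) * d \<le> e / 2"
    using \<open>0 < e\<close> \<open>?Q \<ge> 1\<close> unfolding d_def by (auto simp: field_simps)
  have "eventually (\<lambda>M. \<forall>v\<in>W. c v M \<le> (1 / ?Q + d) * real M) sequentially"
    using upper \<open>0 < d\<close> by (intro eventually_ball_finite[OF assms(1)]) auto
  with eventually_gt_at_top[of 0]
  show "eventually (\<lambda>M. dist (c u M / real M) (1 / ?Q) < e) sequentially"
  proof eventually_elim
    case (elim M)
    have "c u M + (\<Sum>v\<in>W - {u}. c v M) = real M"
      using total[of M] sum.remove[OF assms(1,2), of "\<lambda>v. c v M"] by simp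
    moreover have "(\<Sum>v\<in>W - {u}. c v M) \<le> (\<Sum>v\<in>W - {u}. (1 / ?Q + d) * real M)"
      using elim(2) by (intro sum_mono) auto
    moreover have "(\<Sum>v\<in>W - {u}. (1 / ?Q + d) * real M) = real M - real M * (1 / ?Q - (?Q - 1) * d)"
      using assms(1,2) \<open>card W \<ge> 1\<close> \<open>W \<noteq> {}\<close> by (simp add: card_Diff_singleton add_divide_distrib[symmetric] algebra_simps)
    ultimately have "real M * (1 / ?Q - (?Q - 1) * d) \<le> c u M"
      by linarith
    moreover have "real M * (1 / ?Q - e / 2) \<le> real M * (1 / ?Q - (?Q - 1) * d)"
      using \<open>(?Q - 1) * d \<le> e / 2\<close> by (intro mult_left_mono) auto
    ultimately have "real M * (1 / ?Q - e / 2) \<le> c u M"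
      by linarith
    then have "1 / ?Q - e / 2 \<le> c u M / real M"
      using elim(1) by (simp add: le_divide_eq mult.commute)
    moreover have "c u M / real M \<le> 1 / ?Q + d"
      using elim assms(2) by (simp add: divide_le_eq)
    ultimately show ?case
      using \<open>0 < e\<close> \<open>d < e\<close> by (simp add: dist_real_def abs_less_iff)
  qed
qed

lemma tendsto_aligned_occ_of_block_count:
  assumes "length u = k" "k \<ge> 1"
    and "(\<lambda>M. real (block_count x k M u) / real M) \<longlonglongrightarrow> p"
  shows "(\<lambda>n. real (aligned_occ (prefix_word x n) u) / (real n / real k)) \<longlonglongrightarrow> p"
proof -
  let ?r = "\<lambda>n. real (n div k) / (real n / real k)"
  have "filterlim (\<lambda>n. n div k) sequentially sequentially"
    unfolding filterlim_at_top eventually_sequentially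
    using assms(2) by (auto intro!: exI[of _ "_ * k"] simp: less_eq_div_iff_mult_less_eq)
  then have "(\<lambda>n. real (block_count x k (n div k) u) / real (n div k)) \<longlonglongrightarrow> p"
    by (rule filterlim_compose[OF assms(3)])
  moreover have "?r \<longlonglongrightarrow> 1"
  proof (rule tendsto_sandwich[of "\<lambda>n. 1 - real k / real n" _ _ "\<lambda>_. 1"])
    have "n < n div k * k + k" for n
      using div_mult_mod_eq[of n k] mod_less_divisor[of k n] assms(2) by linarith
    then have below: "real n - real k \<le> real (n div k) * real k" for n
      by (metis less_imp_le of_nat_add of_nat_less_iff of_nat_mult diff_le_eq)
    show "eventually (\<lambda>n. 1 - real k / real n \<le> ?r n) sequentially"
      using eventually_gt_at_top[of 0]
    proof eventually_elim
      case (elim n)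
      then have "1 - real k / real n = (real n - real k) / real n"
        by (simp add: field_simps)
      also have "\<dots> \<le> real (n div k) * real k / real n"
        using below[of n] by (simp add: divide_right_mono)
      also have "\<dots> = ?r n"
        by simp
      finally show ?case .
    qed
    show "eventually (\<lambda>n. ?r n \<le> 1) sequentially"
    proof (intro always_eventually allI)
      fix n
      have "real (n div k) * real k \<le> real n"
        by (metis div_times_less_eq_dividend of_nat_le_iff of_nat_mult)
      then show "?r n \<le> 1"
        using assms(2) by (cases "n = 0") (simp_all add: divide_le_eq_1 le_divide_eq)
    qed
    show "(\<lambda>n. 1 - real k / real n) \<longlonglongrightarrow> 1"
      using tendsto_diff[OF tendsto_const lim_const_over_n[of "real k"]] by simp
  qed simp
  ultimately have "(\<lambda>n. real (block_count x k (n div k) u) / real (n div k) * ?r n) \<longlonglongrightarrow> p"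
    using tendsto_mult by fastforce
  moreover have "real (aligned_occ (prefix_word x n) u) / (real n / real k)
      = real (block_count x k (n div k) u) / real (n div k) * ?r n" for n
    using aligned_occ_prefix_word[OF assms(1,2), of x n] by (cases "n div k = 0") (simp_all add: block_count_def)
  ultimately show ?thesis
    by presburger
qed

lemma limsup_aligned_occ_of_normal_word:
  assumes "normal_word A x" "length w = l" "l \<ge> 1" "set w \<subseteq> A"
  shows "limsup (\<lambda>N. ereal (real (aligned_occ (prefix_word x (l * N)) w) / real N))
    = ereal (1 / real (card A) ^ l)"
proof -
  have "(\<lambda>n. real (aligned_occ (prefix_word x n) w) / (real n / real l)) \<longlonglongrightarrow> 1 / real (card A) ^ l"
    using assms unfolding normal_word_def by blast
  moreover have "strict_mono (\<lambda>N. l * N)"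
    using assms(3) by (auto simp: strict_mono_def)
  ultimately have "(\<lambda>N. real (aligned_occ (prefix_word x (l * N)) w) / real N) \<longlonglongrightarrow> 1 / real (card A) ^ l"
    using LIMSEQ_subseq_LIMSEQ assms(3) by (fastforce simp: o_def)
  then show ?thesis
    by (intro lim_imp_Limsup) simp_all
qed

lemma infinite_levels_of_normal_word:
  assumes "finite A" "\<And>n. x n \<in> A" "normal_word A x"
  shows "infinite {l::nat. \<forall>w. length w = l \<and> set w \<subseteq> A \<longrightarrow>
      limsup (\<lambda>N. ereal (real (aligned_occ (prefix_word x (l * N)) w) / real N))
        < ereal (2 / real (card A) ^ l)}"
proof (rule infinite_super[OF _ infinite_Ici[of 1]], intro subsetI CollectI allI impI)
  fix l :: nat and w assume "l \<in> {1..}" "length w = l \<and> set w \<subseteq> A"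
  then have "limsup (\<lambda>N. ereal (real (aligned_occ (prefix_word x (l * N)) w) / real N))
      = ereal (1 / real (card A) ^ l)"
    using assms(3) by (intro limsup_aligned_occ_of_normal_word) auto
  also have "\<dots> < ereal (2 / real (card A) ^ l)"
  proof -
    have "0 < real (card A) ^ l"
      using assms(1) assms(2)[of 0] by (auto simp: card_gt_0_iff)
    then show ?thesis
      by (simp add: divide_strict_right_mono)
  qed
  finally show "limsup (\<lambda>N. ereal (real (aligned_occ (prefix_word x (l * N)) w) / real N))
      < ereal (2 / real (card A) ^ l)" .
qed

lemma normal_word_of_infinite_levels:
  fixes C :: real
  assumes "finite A" "\<And>n. x n \<in> A" "0 < C"
    and levels: "infinite {l::nat. \<forall>w. length w = l \<and> set w \<subseteq> A \<longrightarrow>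
      limsup (\<lambda>N. ereal (real (aligned_occ (prefix_word x (l * N)) w) / real N))
        < ereal (C / real (card A) ^ l)}"
  shows "normal_word A x"
  unfolding normal_word_def
proof (intro allI impI)
  fix k u assume "1 \<le> k" "length u = k \<and> set u \<subseteq> A"
  then have "(\<lambda>M. real (block_count x k M u) / real M) \<longlonglongrightarrow> 1 / real (card (words A k))"
    using eventually_block_count_le[OF assms(1,2) _ _ _ \<open>0 < C\<close> _ levels] card_words[OF assms(1)]
      sum_block_count[OF assms(1,2)] finite_words[OF assms(1)]
    by (intro tendsto_frequency_of_upper_bounds) (auto simp: words_def)
  then show "(\<lambda>n. real (aligned_occ (prefix_word x n) u) / (real n / real k)) \<longlonglongrightarrow> 1 / real (card A) ^ k"
    using \<open>1 \<le> k\<close> \<open>length u = k \<and> set u \<subseteq> A\<close>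
    by (intro tendsto_aligned_occ_of_block_count) (simp_all add: card_words[OF assms(1)])
qed

theorem lemma15:
  fixes A :: "'a set" and x :: "nat \<Rightarrow> 'a"
  assumes "finite A" and "\<And>n. x n \<in> A"
  shows "normal_word A x \<longleftrightarrow>
    (\<exists>C::real. C > 0 \<and>
       infinite {l::nat. \<forall>w. length w = l \<and> set w \<subseteq> A \<longrightarrow>
          limsup (\<lambda>N. ereal (real (aligned_occ (prefix_word x (l * N)) w) / real N))
            < ereal (C / real (card A) ^ l)})"
proof
  assume "normal_word A x"
  then show "\<exists>C::real. C > 0 \<and> infinite {l::nat. \<forall>w. length w = l \<and> set w \<subseteq> A \<longrightarrow>
      limsup (\<lambda>N. ereal (real (aligned_occ (prefix_word x (l * N)) w) / real N))
        < ereal (C / real (card A) ^ l)}"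
    using infinite_levels_of_normal_word[OF assms] by (intro exI[of _ 2]) simp
qed (elim exE conjE, rule normal_word_of_infinite_levels[OF assms])

end
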